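(* The relation $\mathrm{Step}^{(d)}\cup\mathrm{Step}^{(p)}$ is well-founded: there is no infinite sequence of configurations $\gamma_0,\gamma_1,\dots$ such that each $\gamma_i\to\gamma_{i+1}$ is a d-step or a par-step.
   Context: Let $G$ be a finite, connected, undirected graph with node set $V$ and a distinguished node $r$ (the root). Each node $p$ has a fixed ordered list $N(p)$ of its neighbours. A configuration $\gamma$ assigns to each node $p$ a value $\gamma.p.d\in\mathbb N$ (unbounded) and a neighbour $\gamma.p.par\in N(p)$. For a non-root node $p$ let $Dist_p(\gamma)=\min\{\gamma.q.d+1 : q\in N(p)\}$. Algorithm BFS (Dolev et al.) has the following actions. Root: enabled iff $\gamma.r.d\neq 0$; executing it sets $r.d:=0$. Non-root $p$, action CD: enabled iff $\gamma.p.d\ne Dist_p(\gamma)$; executing sets $p.d:=Dist_p(\gamma)$. Non-root $p$, action CP: enabled iff $\gamma.p.d=Dist_p(\gamma)$ and $\gamma.q_0.d+1\neq\gamma.p.d$ where $q_0=\gamma.p.par$; executing sets $p.par$ to the first $q$ in $N(p)$ with $\gamma.q.d+1=\gamma.p.d$. A node is enabled if one of its actions is enabled. A step $\gamma\to\gamma'$ (unfair daemon) holds iff there is a nonempty set $S$ of nodes enabled in $\gamma$ such that $\gamma'$ is obtained by every $p\in S$ simultaneously executing its enabled action (evaluated in $\gamma$), all other nodes unchanged. $\mathrm{Step}^{(d)}$ (d-steps): steps with $\gamma.r.d=\gamma'.r.d$ and $\gamma.p.d\ne\gamma'.p.d$ for some node $p$. $\mathrm{Step}^{(p)}$ (par-steps):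 steps with $\gamma.p.d=\gamma'.p.d$ for all $p$. A relation is well-founded if it admits no infinite forward chain. *)

theory Defs
  imports Main
begin

text \<open>Nodes form a finite type 'v (so V = UNIV).  N p is the ordered list of
neighbours of p.  A configuration assigns to each node a distance value and a parent.\<close>

record 'v cfg =
  dval :: "'v \<Rightarrow> nat"
  par  :: "'v \<Rightarrow> 'v"

definition graph_ok :: "('v::finite \<Rightarrow> 'v list) \<Rightarrow> bool" where
  "graph_ok N \<longleftrightarrow>
     (\<forall>p. distinct (N p)) \<and>
     (\<forall>p. p \<notin> set (N p)) \<and>
     (\<forall>p q. q \<in> set (N p) \<longleftrightarrow> p \<in> set (N q)) \<and>
     (\<forall>p q. (p, q) \<in> {(a, b). b \<in> set (N a)}\<^sup>*)"

definition valid_cfg :: "('v \<Rightarrow> 'v list) \<Rightarrow> 'v cfg \<Rightarrow> bool" where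
  "valid_cfg N \<gamma> \<longleftrightarrow> (\<forall>p. par \<gamma> p \<in> set (N p))"

definition Dist :: "('v \<Rightarrow> 'v list) \<Rightarrow> 'v cfg \<Rightarrow> 'v \<Rightarrow> nat" where
  "Dist N \<gamma> p = Min ((\<lambda>q. dval \<gamma> q + 1) ` set (N p))"

definition CD_en :: "('v \<Rightarrow> 'v list) \<Rightarrow> 'v \<Rightarrow> 'v cfg \<Rightarrow> 'v \<Rightarrow> bool" where
  "CD_en N r \<gamma> p \<longleftrightarrow> p \<noteq> r \<and> dval \<gamma> p \<noteq> Dist N \<gamma> p"

definition CP_en :: "('v \<Rightarrow> 'v list) \<Rightarrow> 'v \<Rightarrow> 'v cfg \<Rightarrow> 'v \<Rightarrow> bool" where
  "CP_en N r \<gamma> p \<longleftrightarrow> p \<noteq> r \<and> dval \<gamma> p = Dist N \<gamma> p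
      \<and> dval \<gamma> (par \<gamma> p) + 1 \<noteq> dval \<gamma> p"

definition enabled :: "('v \<Rightarrow> 'v list) \<Rightarrow> 'v \<Rightarrow> 'v cfg \<Rightarrow> 'v \<Rightarrow> bool" where
  "enabled N r \<gamma> p \<longleftrightarrow> (p = r \<and> dval \<gamma> r \<noteq> 0) \<or> CD_en N r \<gamma> p \<or> CP_en N r \<gamma> p"

definition new_d :: "('v \<Rightarrow> 'v list) \<Rightarrow> 'v \<Rightarrow> 'v cfg \<Rightarrow> 'v \<Rightarrow> nat" where
  "new_d N r \<gamma> p = (if p = r then 0 else if CD_en N r \<gamma> p then Dist N \<gamma> p else dval \<gamma> p)"

definition new_par :: "('v \<Rightarrow> 'v list) \<Rightarrow> 'v \<Rightarrow> 'v cfg \<Rightarrow> 'v \<Rightarrow> 'v" where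
  "new_par N r \<gamma> p = (if CP_en N r \<gamma> p
      then hd (filter (\<lambda>q. dval \<gamma> q + 1 = dval \<gamma> p) (N p)) else par \<gamma> p)"

definition bfs_step :: "('v \<Rightarrow> 'v list) \<Rightarrow> 'v \<Rightarrow> 'v cfg \<Rightarrow> 'v cfg \<Rightarrow> bool" where
  "bfs_step N r \<gamma> \<gamma>' \<longleftrightarrow> (\<exists>S. S \<noteq> {} \<and> (\<forall>p\<in>S. enabled N r \<gamma> p) \<and>
      \<gamma>' = \<lparr>dval = (\<lambda>p. if p \<in> S then new_d N r \<gamma> p else dval \<gamma> p),
            par = (\<lambda>p. if p \<in> S then new_par N r \<gamma> p else par \<gamma> p)\<rparr>)"

definition d_step :: "('v \<Rightarrow> 'v list) \<Rightarrow> 'v \<Rightarrow> 'v cfg \<Rightarrow> 'v cfg \<Rightarrow> bool" where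
  "d_step N r \<gamma> \<gamma>' \<longleftrightarrow> valid_cfg N \<gamma> \<and> bfs_step N r \<gamma> \<gamma>' \<and>
      dval \<gamma> r = dval \<gamma>' r \<and> (\<exists>p. dval \<gamma> p \<noteq> dval \<gamma>' p)"

definition par_step :: "('v \<Rightarrow> 'v list) \<Rightarrow> 'v \<Rightarrow> 'v cfg \<Rightarrow> 'v cfg \<Rightarrow> bool" where
  "par_step N r \<gamma> \<gamma>' \<longleftrightarrow> valid_cfg N \<gamma> \<and> bfs_step N r \<gamma> \<gamma>' \<and>
      (\<forall>p. dval \<gamma> p = dval \<gamma>' p)"

end

theory Submission
  imports Defs
begin

text \<open>Both kinds of step leave the root alone and can only reset a node's distance to its
  current value Dist.  Such relaxations keep every distance below a bound depending on the
  initial configuration and the BFS level.  If some nodes changed their distance infinitely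
  often, take the least value m that one of them, p, attains infinitely often.  Eventually all
  these nodes stay at or above m and all other nodes are constant, so from some time on Dist at
  p is either always at most m or always above m; in the first case every later change of p
  lands on m and p stops changing, in the second p never returns to m.  Hence the distances
  eventually freeze, and from then on only par-steps remain, each of which strictly shrinks the
  set of nodes enabled for CP.\<close>

lemma frequently_eq_if_finite_range:
  assumes "finite A" "\<And>t. f t \<in> A" "F \<noteq> bot"
  shows "\<exists>v\<in>A. \<exists>\<^sub>F t in F. f t = v"
proof -
  have "\<exists>\<^sub>F t in F. \<exists>v\<in>A. f t = v"
    using assms(2,3) by (intro eventually_frequently) auto
  with assms(1) show ?thesis by (rule frequently_bex_finite)
qed

lemma eventually_ge_if_infrequent_below:
  fixes f :: "'a \<Rightarrow> nat"
  assumes "\<And>v. v < m \<Longrightarrow> \<not> (\<exists>\<^sub>F t in F. f t = v)"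
  shows "\<forall>\<^sub>F t in F. m \<le> f t"
proof -
  have "\<forall>\<^sub>F t in F. \<forall>v\<in>{..<m}. f t \<noteq> v"
    using assms by (intro eventually_ball_finite) (auto simp: not_frequently)
  then show ?thesis by (rule eventually_mono) (auto simp: not_le)
qed

lemma eventually_constant_if_eventually_stable:
  fixes f :: "nat \<Rightarrow> 'a"
  assumes "\<forall>\<^sub>F t in sequentially. f (Suc t) = f t"
  shows "\<exists>c. \<forall>\<^sub>F t in sequentially. f t = c"
proof -
  obtain T where T: "\<And>t. t \<ge> T \<Longrightarrow> f (Suc t) = f t"
    using assms by (auto simp: eventually_sequentially)
  have "f t = f T" if "t \<ge> T" for t
    using that by (induction t rule: dec_induct) (auto simp: T)
  then show ?thesis by (auto simp: eventually_sequentially)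
qed

lemma eventually_in_if_frequent_changes_into:
  fixes f :: "nat \<Rightarrow> 'a"
  assumes "\<forall>\<^sub>F t in sequentially. f (Suc t) \<noteq> f t \<longrightarrow> f (Suc t) \<in> S"
    and "\<exists>\<^sub>F t in sequentially. f (Suc t) \<noteq> f t"
  shows "\<forall>\<^sub>F t in sequentially. f t \<in> S"
proof -
  obtain T where T: "\<And>t. t \<ge> T \<Longrightarrow> f (Suc t) \<noteq> f t \<Longrightarrow> f (Suc t) \<in> S"
    using assms(1) by (auto simp: eventually_sequentially)
  obtain s where "s \<ge> T" "f (Suc s) \<noteq> f s"
    using assms(2) by (auto simp: frequently_sequentially)
  have "f t \<in> S" if "t \<ge> Suc s" for t
    using that
  proof (induction t rule: dec_induct)
    case base
    show ?case using T \<open>s \<ge> T\<close> \<open>f (Suc s) \<noteq> f s\<close> .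
  next
    case (step t)
    then show ?case using T[of t] \<open>s \<ge> T\<close> by (cases "f (Suc t) = f t") auto
  qed
  then show ?thesis by (rule eventually_sequentiallyI)
qed

lemma neighbours_nonempty:
  fixes N :: "'v::finite \<Rightarrow> 'v list"
  assumes "graph_ok N" "p \<noteq> r"
  shows "N p \<noteq> []"
proof -
  have "(p, r) \<in> {(a, b). b \<in> set (N a)}\<^sup>*" using assms(1) unfolding graph_ok_def by blast
  then show ?thesis
    by (rule converse_rtranclE) (use assms(2) in auto)
qed

lemma exists_level_function:
  fixes N :: "'v::finite \<Rightarrow> 'v list"
  assumes "graph_ok N"
  obtains h :: "'v \<Rightarrow> nat" where "\<And>p. p \<noteq> r \<Longrightarrow> \<exists>q\<in>set (N p). h q < h p"
proof -
  let ?E = "{(a, b). b \<in> set (N a)}"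
  define h where "h p = (LEAST k. (r, p) \<in> ?E ^^ k)" for p
  have reach: "\<exists>k. (r, p) \<in> ?E ^^ k" for p
    using assms rtrancl_power unfolding graph_ok_def by blast
  have "\<exists>q\<in>set (N p). h q < h p" if "p \<noteq> r" for p
  proof -
    have hp: "(r, p) \<in> ?E ^^ h p" unfolding h_def by (rule LeastI_ex) (rule reach)
    with \<open>p \<noteq> r\<close> obtain k where k: "h p = Suc k" by (cases "h p") auto
    with hp obtain q where q: "(r, q) \<in> ?E ^^ k" "(q, p) \<in> ?E" by auto
    have "h q \<le> k" unfolding h_def using q(1) by (rule Least_le)
    moreover have "q \<in> set (N p)" using q(2) assms unfolding graph_ok_def by blast
    ultimately show ?thesis using k by force
  qed
  then show ?thesis using that by blast
qed

lemma Dist_le: "q \<in> set (N p) \<Longrightarrow> Dist N \<gamma> p \<le> dval \<gamma> q + 1"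
  unfolding Dist_def by (rule Min_le) auto

lemma Dist_attained:
  assumes "N p \<noteq> []"
  obtains q where "q \<in> set (N p)" "Dist N \<gamma> p = dval \<gamma> q + 1"
proof -
  have "Dist N \<gamma> p \<in> (\<lambda>q. dval \<gamma> q + 1) ` set (N p)"
    unfolding Dist_def using assms by (intro Min_in) auto
  then show ?thesis using that by blast
qed

lemma less_Dist:
  assumes "N p \<noteq> []" "\<forall>q\<in>set (N p). v < dval \<gamma> q + 1"
  shows "v < Dist N \<gamma> p"
  using assms by (metis Dist_attained)

definition relax_step :: "('v \<Rightarrow> 'v list) \<Rightarrow> 'v \<Rightarrow> 'v cfg \<Rightarrow> 'v cfg \<Rightarrow> bool" where
  "relax_step N r \<gamma> \<gamma>' \<longleftrightarrow>
     (\<forall>p. dval \<gamma>' p = dval \<gamma> p \<or> (p \<noteq> r \<and> dval \<gamma>' p = Dist N \<gamma> p))"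

lemma relax_step_if_step:
  assumes "d_step N r \<gamma> \<gamma>' \<or> par_step N r \<gamma> \<gamma>'"
  shows "relax_step N r \<gamma> \<gamma>'"
proof -
  have root: "dval \<gamma>' r = dval \<gamma> r"
    using assms unfolding d_step_def par_step_def by auto
  from assms obtain S where "\<gamma>' = \<lparr>dval = (\<lambda>p. if p \<in> S then new_d N r \<gamma> p else dval \<gamma> p),
      par = (\<lambda>p. if p \<in> S then new_par N r \<gamma> p else par \<gamma> p)\<rparr>"
    unfolding d_step_def par_step_def bfs_step_def by blast
  then show ?thesis
    using root unfolding relax_step_def by (auto simp: new_d_def)
qed

lemma relax_bounded:
  fixes \<gamma> :: "nat \<Rightarrow> 'v::finite cfg"
  assumes "graph_ok N" and relax: "\<And>t. relax_step N r (\<gamma> t) (\<gamma> (Suc t))"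
  obtains B where "\<And>t p. dval (\<gamma> t) p \<le> B"
proof -
  obtain h :: "'v \<Rightarrow> nat" where h: "\<And>p. p \<noteq> r \<Longrightarrow> \<exists>q\<in>set (N p). h q < h p"
    using exists_level_function[OF assms(1)] by blast
  define K where "K = Max (range (dval (\<gamma> 0)))"
  have level_bound: "dval (\<gamma> t) p \<le> K + h p" for t p
  proof (induction t arbitrary: p)
    case 0
    show ?case unfolding K_def by (simp add: trans_le_add1)
  next
    case (Suc t)
    show ?case
    proof (cases "dval (\<gamma> (Suc t)) p = dval (\<gamma> t) p")
      case True
      then show ?thesis using Suc.IH by simp
    next
      case False
      with relax[of t] have "p \<noteq> r" and new: "dval (\<gamma> (Suc t)) p = Dist N (\<gamma> t) p"
        unfolding relax_step_def by blast+
      then obtain q where q: "q \<in> set (N p)" "h q < h p" using h by blast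
      have "dval (\<gamma> (Suc t)) p \<le> dval (\<gamma> t) q + 1" using new Dist_le[of q N p] q(1) by simp
      also have "\<dots> \<le> K + h q + 1" using Suc.IH[of q] by simp
      finally show ?thesis using q(2) by simp
    qed
  qed
  show ?thesis
  proof
    fix t p
    have "h p \<le> Max (range h)" by (rule Max_ge) auto
    with level_bound[of t p] show "dval (\<gamma> t) p \<le> K + Max (range h)" by linarith
  qed
qed

lemma eventually_less_Dist:
  assumes "N p \<noteq> []"
    and neighbours: "\<forall>q\<in>set (N p). (\<forall>\<^sub>F t in sequentially. m \<le> dval (\<gamma> t) q)
                     \<or> (\<exists>c. m < c + 1 \<and> (\<forall>\<^sub>F t in sequentially. dval (\<gamma> t) q = c))"
  shows "\<forall>\<^sub>F t in sequentially. m < Dist N (\<gamma> t) p"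
proof -
  have "\<forall>\<^sub>F t in sequentially. \<forall>q\<in>set (N p). m < dval (\<gamma> t) q + 1"
  proof (intro eventually_ball_finite ballI)
    fix q assume "q \<in> set (N p)"
    with neighbours consider "\<forall>\<^sub>F t in sequentially. m \<le> dval (\<gamma> t) q"
      | c where "m < c + 1" "\<forall>\<^sub>F t in sequentially. dval (\<gamma> t) q = c" by blast
    then show "\<forall>\<^sub>F t in sequentially. m < dval (\<gamma> t) q + 1"
      by cases (auto elim: eventually_mono)
  qed simp
  then show ?thesis by (rule eventually_mono) (rule less_Dist[of N p, OF assms(1)])
qed

lemma relax_node_eventually_stable:
  assumes relax: "\<And>t. relax_step N r (\<gamma> t) (\<gamma> (Suc t))" and "N p \<noteq> []"
    and above: "\<forall>\<^sub>F t in sequentially. m \<le> dval (\<gamma> t) p"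
    and hits: "\<exists>\<^sub>F t in sequentially. dval (\<gamma> t) p = m"
    and neighbours: "\<forall>q\<in>set (N p). (\<forall>\<^sub>F t in sequentially. m \<le> dval (\<gamma> t) q)
                        \<or> (\<exists>c. \<forall>\<^sub>F t in sequentially. dval (\<gamma> t) q = c)"
  shows "\<forall>\<^sub>F t in sequentially. dval (\<gamma> (Suc t)) p = dval (\<gamma> t) p"
proof (rule ccontr)
  let ?d = "\<lambda>t. dval (\<gamma> t) p"
  assume "\<not> ?thesis"
  then have changes: "\<exists>\<^sub>F t in sequentially. ?d (Suc t) \<noteq> ?d t"
    by (simp add: not_eventually)
  have to_Dist: "?d (Suc t) \<noteq> ?d t \<Longrightarrow> ?d (Suc t) = Dist N (\<gamma> t) p" for t
    using relax[of t] unfolding relax_step_def by blast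
  show False
  proof (cases "\<exists>q\<in>set (N p). \<exists>c. c + 1 \<le> m \<and> (\<forall>\<^sub>F t in sequentially. dval (\<gamma> t) q = c)")
    case True
    then obtain q c where q: "q \<in> set (N p)" "c + 1 \<le> m"
      and settled: "\<forall>\<^sub>F t in sequentially. dval (\<gamma> t) q = c" by blast
    have "\<forall>\<^sub>F t in sequentially. ?d (Suc t) \<noteq> ?d t \<longrightarrow> ?d (Suc t) \<in> {m}"
      using settled above[folded eventually_sequentially_Suc[of "\<lambda>t. m \<le> ?d t"]]
    proof eventually_elim
      case (elim t)
      then show ?case using to_Dist[of t] Dist_le[of q N p "\<gamma> t"] q by auto
    qed
    then have "\<forall>\<^sub>F t in sequentially. ?d t \<in> {m}"
      using changes by (rule eventually_in_if_frequent_changes_into)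
    then have "\<forall>\<^sub>F t in sequentially. ?d t = m" by simp
    moreover from this have "\<forall>\<^sub>F t in sequentially. ?d (Suc t) = m"
      using eventually_sequentially_Suc[of "\<lambda>t. ?d t = m"] by simp
    ultimately have "\<forall>\<^sub>F t in sequentially. ?d (Suc t) = ?d t"
      by eventually_elim simp
    then show False using changes by (simp add: frequently_def)
  next
    case False
    have "\<forall>\<^sub>F t in sequentially. m < Dist N (\<gamma> t) p"
      using \<open>N p \<noteq> []\<close>
    proof (rule eventually_less_Dist, intro ballI)
      fix q assume "q \<in> set (N p)"
      with neighbours False
      show "(\<forall>\<^sub>F t in sequentially. m \<le> dval (\<gamma> t) q)
          \<or> (\<exists>c. m < c + 1 \<and> (\<forall>\<^sub>F t in sequentially. dval (\<gamma> t) q = c))"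
        by (meson not_le)
    qed
    then have "\<forall>\<^sub>F t in sequentially. ?d (Suc t) \<noteq> ?d t \<longrightarrow> ?d (Suc t) \<in> {v. m < v}"
      by (rule eventually_mono) (use to_Dist in auto)
    then have "\<forall>\<^sub>F t in sequentially. ?d t \<in> {v. m < v}"
      using changes by (rule eventually_in_if_frequent_changes_into)
    then have "\<forall>\<^sub>F t in sequentially. ?d t \<noteq> m"
      by (rule eventually_mono) simp
    with hits show False by (simp add: frequently_def)
  qed
qed

lemma relax_eventually_stable:
  fixes \<gamma> :: "nat \<Rightarrow> 'v::finite cfg"
  assumes "graph_ok N" and relax: "\<And>t. relax_step N r (\<gamma> t) (\<gamma> (Suc t))"
  shows "\<forall>\<^sub>F t in sequentially. dval (\<gamma> (Suc t)) = dval (\<gamma> t)"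
proof -
  let ?d = "\<lambda>t. dval (\<gamma> t)"
  define C where "C = {p. \<exists>\<^sub>F t in sequentially. ?d (Suc t) p \<noteq> ?d t p}"
  obtain B where B: "\<And>t p. ?d t p \<le> B" using relax_bounded[of N r \<gamma>, OF assms] by blast
  have "C = {}"
  proof (rule ccontr)
    assume "C \<noteq> {}"
    then obtain p0 where "p0 \<in> C" by blast
    obtain v0 where "\<exists>\<^sub>F t in sequentially. ?d t p0 = v0"
      using frequently_eq_if_finite_range[of "{..B}" "\<lambda>t. ?d t p0" sequentially] B by auto
    define m where "m = (LEAST v. \<exists>q\<in>C. \<exists>\<^sub>F t in sequentially. ?d t q = v)"
    obtain p where "p \<in> C" and hits: "\<exists>\<^sub>F t in sequentially. ?d t p = m"
      using LeastI[of "\<lambda>v. \<exists>q\<in>C. \<exists>\<^sub>F t in sequentially. ?d t q = v", OF bexI]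
        \<open>p0 \<in> C\<close> \<open>\<exists>\<^sub>F t in sequentially. ?d t p0 = v0\<close> unfolding m_def by blast
    have above: "\<forall>\<^sub>F t in sequentially. m \<le> ?d t q" if "q \<in> C" for q
      using that by (intro eventually_ge_if_infrequent_below) (auto simp: m_def dest: not_less_Least)
    have settles: "\<exists>c. \<forall>\<^sub>F t in sequentially. ?d t q = c" if "q \<notin> C" for q
      using that by (intro eventually_constant_if_eventually_stable) (simp add: C_def not_frequently)
    have "?d (Suc t) r = ?d t r" for t using relax[of t] unfolding relax_step_def by blast
    then have "r \<notin> C" by (simp add: C_def)
    with \<open>p \<in> C\<close> have "p \<noteq> r" by blast
    with assms(1) have "N p \<noteq> []" by (rule neighbours_nonempty)
    have "\<forall>\<^sub>F t in sequentially. ?d (Suc t) p = ?d t p"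
      using relax \<open>N p \<noteq> []\<close> above[OF \<open>p \<in> C\<close>] hits
      by (rule relax_node_eventually_stable) (use above settles in blast)
    with \<open>p \<in> C\<close> show False by (simp add: C_def frequently_def)
  qed
  then have "\<forall>\<^sub>F t in sequentially. \<forall>p. ?d (Suc t) p = ?d t p"
    by (intro eventually_all_finite) (simp add: C_def not_frequently)
  then show ?thesis by (simp add: fun_eq_iff)
qed

lemma par_step_CP_en_psubset:
  fixes \<gamma> :: "'v::finite cfg"
  assumes "graph_ok N" and step: "par_step N r \<gamma> \<gamma>'"
  shows "{p. CP_en N r \<gamma>' p} \<subset> {p. CP_en N r \<gamma> p}"
proof -
  from step have same_d: "dval \<gamma>' = dval \<gamma>" unfolding par_step_def by auto
  then have same_Dist: "Dist N \<gamma>' = Dist N \<gamma>" unfolding Dist_def by (simp add: fun_eq_iff)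
  from step obtain S where "S \<noteq> {}" and en: "\<forall>p\<in>S. enabled N r \<gamma> p"
    and \<gamma>': "\<gamma>' = \<lparr>dval = (\<lambda>p. if p \<in> S then new_d N r \<gamma> p else dval \<gamma> p),
              par = (\<lambda>p. if p \<in> S then new_par N r \<gamma> p else par \<gamma> p)\<rparr>"
    unfolding par_step_def bfs_step_def by blast
  have fixed: "CP_en N r \<gamma> p \<and> \<not> CP_en N r \<gamma>' p" if "p \<in> S" for p
  proof -
    have "new_d N r \<gamma> p = dval \<gamma> p" using fun_cong[OF same_d, of p] \<gamma>' that by simp
    then have CP: "CP_en N r \<gamma> p"
      using en that unfolding enabled_def new_d_def CD_en_def by (auto split: if_splits)
    then have "p \<noteq> r" and dp: "dval \<gamma> p = Dist N \<gamma> p" unfolding CP_en_def by auto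
    obtain q where "q \<in> set (N p)" "Dist N \<gamma> p = dval \<gamma> q + 1"
      using Dist_attained[of N p, OF neighbours_nonempty[OF assms(1) \<open>p \<noteq> r\<close>]] by blast
    let ?l = "filter (\<lambda>q. dval \<gamma> q + 1 = dval \<gamma> p) (N p)"
    have "?l \<noteq> []" using dp \<open>q \<in> set (N p)\<close> \<open>Dist N \<gamma> p = dval \<gamma> q + 1\<close>
      by (auto simp: filter_empty_conv)
    then have "hd ?l \<in> set ?l" by (rule hd_in_set)
    moreover have "par \<gamma>' p = hd ?l" using \<gamma>' that CP by (simp add: new_par_def)
    ultimately have "dval \<gamma> (par \<gamma>' p) + 1 = dval \<gamma> p" by simp
    then show ?thesis using CP same_d unfolding CP_en_def by simp
  qed
  have "CP_en N r \<gamma>' p = CP_en N r \<gamma> p" if "p \<notin> S" for p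
    using \<gamma>' that same_d same_Dist unfolding CP_en_def by simp
  with fixed \<open>S \<noteq> {}\<close> show ?thesis by blast
qed

lemma not_eventually_par_step:
  fixes \<gamma> :: "nat \<Rightarrow> 'v::finite cfg"
  assumes "graph_ok N"
  shows "\<not> (\<forall>\<^sub>F i in sequentially. par_step N r (\<gamma> i) (\<gamma> (Suc i)))"
proof
  assume "\<forall>\<^sub>F i in sequentially. par_step N r (\<gamma> i) (\<gamma> (Suc i))"
  then obtain T where T: "\<forall>i\<ge>T. par_step N r (\<gamma> i) (\<gamma> (Suc i))"
    by (auto simp: eventually_sequentially)
  define A where "A i = {p. CP_en N r (\<gamma> (i + T)) p}" for i
  have "(A (Suc i), A i) \<in> finite_psubset" for i
    using par_step_CP_en_psubset[OF assms] T unfolding A_def finite_psubset_def by simp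
  then show False
    using wf_finite_psubset unfolding wf_iff_no_infinite_down_chain by blast
qed

lemma par_step_if_dval_unchanged:
  assumes "d_step N r \<gamma> \<gamma>' \<or> par_step N r \<gamma> \<gamma>'" "dval \<gamma>' = dval \<gamma>"
  shows "par_step N r \<gamma> \<gamma>'"
  using assms unfolding d_step_def by auto

theorem lemma2:
  fixes N :: "'v::finite \<Rightarrow> 'v list" and r :: 'v
  assumes "graph_ok N"
  shows "\<not> (\<exists>\<gamma> :: nat \<Rightarrow> 'v cfg. \<forall>i. d_step N r (\<gamma> i) (\<gamma> (Suc i)) \<or> par_step N r (\<gamma> i) (\<gamma> (Suc i)))"
proof
  assume "\<exists>\<gamma> :: nat \<Rightarrow> 'v cfg. \<forall>i. d_step N r (\<gamma> i) (\<gamma> (Suc i)) \<or> par_step N r (\<gamma> i) (\<gamma> (Suc i))"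
  then obtain \<gamma> :: "nat \<Rightarrow> 'v cfg"
    where step: "\<And>i. d_step N r (\<gamma> i) (\<gamma> (Suc i)) \<or> par_step N r (\<gamma> i) (\<gamma> (Suc i))"
    by blast
  have "\<forall>\<^sub>F i in sequentially. dval (\<gamma> (Suc i)) = dval (\<gamma> i)"
    using assms relax_step_if_step[OF step] by (rule relax_eventually_stable)
  then have "\<forall>\<^sub>F i in sequentially. par_step N r (\<gamma> i) (\<gamma> (Suc i))"
    by (rule eventually_mono) (rule par_step_if_dval_unchanged[OF step])
  with not_eventually_par_step[OF assms] show False by blast
qed

end
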